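(* Let $H$ be a complex Hilbert space and let $\mathcal{U}\subseteq Sob(H)$ be a set of sub-observables all having the same outcome space $(\Omega,\mathcal{F})$, such that: (S1) there exists an observable $Z\in\mathcal{U}$; (S2) if $A\in\mathcal{U}$ then $A'=Z-A\in\mathcal{U}$; (S3) if $A,B\in\mathcal{U}$ and $A+B\in Sob(H)$, then $A+B\in\mathcal{U}$. For $A,B\in\mathcal{U}$ write $A\perp B$ if $A+B\in Sob(H)$, and in that case set $A\oplus B=A+B$. Then $(\mathcal{U},0,Z,\oplus)$ is an effect algebra (here $0$ denotes the zero sub-observable $\Delta\mapsto 0$).
   Context: $\mathcal{L}(H)$ is the set of bounded operators on $H$; $A\le B$ means $\langle\phi,A\phi\rangle\le\langle\phi,B\phi\rangle$ for all $\phi$. An effect is $a\in\mathcal{L}(H)$ with $0\le a\le I$; $\mathcal{E}(H)$ is the set of effects. For a measurable space $(\Omega,\mathcal{F})$, a sub-observable is a map $A:\mathcal{F}\to\mathcal{E}(H)$ that is countably additive in the strong operator topology; it is an observable if moreover $A(\Omega)=I$. $Sob(H)$ denotes the set of sub-observables; sums and differences of sub-observables with the same outcome space are taken pointwise ($(A+B)(\Delta)=A(\Delta)+B(\Delta)$). An effect algebra is a tuple $(E,0,1,\oplus)$ with $\oplus$ a partial binary operation (write $a\perp b$ when $a\oplus b$ is defined) such that: (E1) if $a\perp b$ then $b\perp a$ and $a\oplus b=b\oplus a$; (E2) if $a\perp b$ and $c\perp(a\oplus b)$ then $b\perp c$, $a\perp(b\oplus c)$ and $a\oplus(b\oplus c)=(a\oplus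 b)\oplus c$; (E3) for each $a\in E$ there is a unique $a'\in E$ with $a'\perp a$ and $a\oplus a'=1$; (E4) if $a\perp 1$ then $a=0$. *)

theory Defs
  imports "HOL-Analysis.Analysis" "HOL-Library.Complex_Order" "HOL-Library.Function_Algebras"
begin

class complex_inner = real_normed_vector +
  fixes scaleC :: "complex \<Rightarrow> 'a \<Rightarrow> 'a"
    and cinner :: "'a \<Rightarrow> 'a \<Rightarrow> complex"
  assumes scaleC_add_right: "scaleC c (x + y) = scaleC c x + scaleC c y"
    and scaleC_add_left: "scaleC (c + d) x = scaleC c x + scaleC d x"
    and scaleC_scaleC: "scaleC c (scaleC d x) = scaleC (c * d) x"
    and scaleC_one: "scaleC 1 x = x"
    and scaleR_scaleC: "scaleR r x = scaleC (complex_of_real r) x"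
    and cinner_commute: "cinner x y = cnj (cinner y x)"
    and cinner_add_left: "cinner (x + y) z = cinner x z + cinner y z"
    and cinner_scaleC_left: "cinner (scaleC c x) y = cnj c * cinner x y"
    and cinner_ge_zero: "0 \<le> cinner x x"
    and cinner_eq_zero_iff: "cinner x x = 0 \<longleftrightarrow> x = 0"
    and norm_eq_sqrt_cinner: "norm x = sqrt (Re (cinner x x))"

class chilbert_space = complex_inner + complete_space

definition clinear_op :: "('h::complex_inner \<Rightarrow> 'h) \<Rightarrow> bool" where
  "clinear_op f \<longleftrightarrow> (\<forall>x y. f (x + y) = f x + f y) \<and> (\<forall>c x. f (scaleC c x) = scaleC c (f x))"

definition bounded_op :: "('h::complex_inner \<Rightarrow> 'h) \<Rightarrow> bool" where
  "bounded_op f \<longleftrightarrow> clinear_op f \<and> (\<exists>K. \<forall>x. norm (f x) \<le> norm x * K)"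

text \<open>\<open>A \<le> B\<close> iff \<open>\<langle>\<phi>,A\<phi>\<rangle> \<le> \<langle>\<phi>,B\<phi>\<rangle>\<close> for all \<open>\<phi>\<close> (order on complex numbers from
Complex_Order: real parts compared, imaginary parts equal).\<close>
definition op_le :: "('h::complex_inner \<Rightarrow> 'h) \<Rightarrow> ('h \<Rightarrow> 'h) \<Rightarrow> bool" where
  "op_le A B \<longleftrightarrow> (\<forall>\<phi>. cinner \<phi> (A \<phi>) \<le> cinner \<phi> (B \<phi>))"

definition is_effect :: "('h::complex_inner \<Rightarrow> 'h) \<Rightarrow> bool" where
  "is_effect a \<longleftrightarrow> bounded_op a \<and> op_le (\<lambda>_. 0) a \<and> op_le a id"

text \<open>As a convention
(to make equality of sub-observables meaningful) it is \<open>0\<close> outside \<open>sets M\<close>.\<close>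
definition Sob :: "'w measure \<Rightarrow> ('w set \<Rightarrow> 'h::complex_inner \<Rightarrow> 'h) set" where
  "Sob M = {A. (\<forall>\<Delta>\<in>sets M. is_effect (A \<Delta>))
              \<and> (\<forall>\<Delta>. \<Delta> \<notin> sets M \<longrightarrow> A \<Delta> = 0)
              \<and> (\<forall>D :: nat \<Rightarrow> 'w set. range D \<subseteq> sets M \<longrightarrow> disjoint_family D \<longrightarrow>
                    (\<forall>\<phi>. (\<lambda>n. A (D n) \<phi>) sums (A (\<Union>n. D n) \<phi>)))}"

definition is_observable :: "'w measure \<Rightarrow> ('w set \<Rightarrow> 'h::complex_inner \<Rightarrow> 'h) \<Rightarrow> bool" where
  "is_observable M A \<longleftrightarrow> A \<in> Sob M \<and> A (space M) = id"

text \<open>An effect algebra on carrier \<open>E\<close>; the partial operation is given by the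
orthogonality relation \<open>perp\<close> and a total function \<open>oplus\<close> that is only
meaningful on orthogonal pairs.\<close>
definition effect_algebra ::
  "'a set \<Rightarrow> ('a \<Rightarrow> 'a \<Rightarrow> bool) \<Rightarrow> ('a \<Rightarrow> 'a \<Rightarrow> 'a) \<Rightarrow> 'a \<Rightarrow> 'a \<Rightarrow> bool" where
  "effect_algebra E perp oplus zero one \<longleftrightarrow>
     zero \<in> E \<and> one \<in> E \<and>
     (\<forall>a\<in>E. \<forall>b\<in>E. perp a b \<longrightarrow> oplus a b \<in> E) \<and>
     (\<forall>a\<in>E. \<forall>b\<in>E. perp a b \<longrightarrow> perp b a \<and> oplus a b = oplus b a) \<and>
     (\<forall>a\<in>E. \<forall>b\<in>E. \<forall>c\<in>E. perp a b \<and> perp c (oplus a b) \<longrightarrow>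
        perp b c \<and> perp a (oplus b c) \<and> oplus a (oplus b c) = oplus (oplus a b) c) \<and>
     (\<forall>a\<in>E. \<exists>!a'. a' \<in> E \<and> perp a' a \<and> oplus a a' = one) \<and>
     (\<forall>a\<in>E. perp a one \<longrightarrow> a = zero)"

end

theory Submission
  imports Defs
begin

text \<open>Commutativity and the uniqueness of complements are inherited from pointwise addition:
the complement of \<open>A\<close> can only be \<open>Z - A\<close>. For associativity, if \<open>A + (B + C)\<close> is a
sub-observable then so is \<open>B + C\<close>, because \<open>0 \<le> A(\<Delta>)\<close> gives
\<open>B(\<Delta>) + C(\<Delta>) \<le> A(\<Delta>) + B(\<Delta>) + C(\<Delta>) \<le> I\<close>. Finally, if \<open>A + Z\<close> is a sub-observable then
\<open>A(\<Omega>) + I \<le> I\<close>, so by additivity \<open>0 \<le> A(\<Delta>) \<le> A(\<Omega>) \<le> 0\<close> for every event \<open>\<Delta>\<close>; since \<open>H\<close> is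
complex, an operator whose quadratic form vanishes is zero (polarization), hence \<open>A = 0\<close>.\<close>

lemma cinner_add_right: "cinner x (y + z) = cinner x y + cinner x (z::'a::complex_inner)"
  by (metis cinner_commute cinner_add_left complex_cnj_add)

lemma cinner_scaleC_right: "cinner x (scaleC c y) = c * cinner x (y::'a::complex_inner)"
  by (metis cinner_commute cinner_scaleC_left complex_cnj_mult complex_cnj_cnj)

lemma cinner_zero_right [simp]: "cinner x (0::'a::complex_inner) = 0"
  using cinner_add_right[of x 0 0] by simp

lemma clinear_op_eq_zero_if_cinner_self_zero:
  fixes T :: "'h::complex_inner \<Rightarrow> 'h"
  assumes lin: "clinear_op T" and zero: "\<And>\<phi>. cinner \<phi> (T \<phi>) = 0"
  shows "T = (\<lambda>_. 0)"
proof
  fix y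
  have add: "T (u + v) = T u + T v" and scale: "T (scaleC c u) = scaleC c (T u)" for u v c
    using lin unfolding clinear_op_def by blast+
  have sym: "cinner x (T y) + cinner y (T x) = 0" for x y
    using zero[of "x + y"] zero[of x] zero[of y]
    by (simp add: add cinner_add_left cinner_add_right add.commute)
  have antisym: "cinner x (T y) - cinner y (T x) = 0" for x y
  proof -
    have "\<i> * cinner x (T y) + - \<i> * cinner y (T x) = 0"
      using sym[of x "scaleC \<i> y"]
      by (simp only: scale cinner_scaleC_right cinner_scaleC_left complex_cnj_i)
    then have "\<i> * (cinner x (T y) - cinner y (T x)) = 0"
      by (simp add: right_diff_distrib)
    then show ?thesis by simp
  qed
  have "cinner (T y) (T y) = 0"
    using sym[of "T y" y] antisym[of "T y" y] by (simp add: algebra_simps)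
  then show "T y = 0" by (simp add: cinner_eq_zero_iff)
qed

lemma op_le_zero_iff: "op_le (\<lambda>_. 0) a \<longleftrightarrow> (\<forall>\<phi>. 0 \<le> cinner \<phi> (a \<phi>))"
  by (simp add: op_le_def)

lemma bounded_op_add:
  assumes "bounded_op f" "bounded_op g"
  shows "bounded_op (f + g)"
proof -
  from assms obtain K L where K: "\<And>x. norm (f x) \<le> norm x * K"
    and L: "\<And>x. norm (g x) \<le> norm x * L"
    unfolding bounded_op_def by blast
  have "norm ((f + g) x) \<le> norm x * (K + L)" for x
    using norm_triangle_ineq[of "f x" "g x"] K[of x] L[of x] by (simp add: distrib_left)
  moreover have "clinear_op (f + g)"
    using assms unfolding bounded_op_def clinear_op_def by (simp add: scaleC_add_right)
  ultimately show ?thesis unfolding bounded_op_def by blast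
qed

lemma is_effect_summand:
  assumes a: "is_effect a" and b: "bounded_op b" "op_le (\<lambda>_. 0) b"
    and ab: "is_effect (a + b)"
  shows "is_effect b"
proof -
  have "cinner \<phi> (b \<phi>) \<le> cinner \<phi> ((a + b) \<phi>)" for \<phi>
    using a unfolding is_effect_def op_le_zero_iff by (simp add: cinner_add_right)
  also have "cinner \<phi> ((a + b) \<phi>) \<le> cinner \<phi> (id \<phi>)" for \<phi>
    using ab unfolding is_effect_def op_le_def by blast
  finally show ?thesis using b unfolding is_effect_def op_le_def by blast
qed

lemma SobD:
  assumes "A \<in> Sob M"
  shows "\<And>\<Delta>. \<Delta> \<in> sets M \<Longrightarrow> is_effect (A \<Delta>)"
    and "\<And>\<Delta>. \<Delta> \<notin> sets M \<Longrightarrow> A \<Delta> = 0"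
    and "\<And>D \<phi>. range D \<subseteq> sets M \<Longrightarrow> disjoint_family D \<Longrightarrow>
           (\<lambda>n. A (D n) \<phi>) sums (A (\<Union>n. D n) \<phi>)"
  using assms unfolding Sob_def by blast+

lemma Sob_add_iff:
  assumes A: "A \<in> Sob M" and B: "B \<in> Sob M"
  shows "A + B \<in> Sob M \<longleftrightarrow> (\<forall>\<Delta>\<in>sets M. is_effect (A \<Delta> + B \<Delta>))"
proof
  assume "A + B \<in> Sob M"
  then show "\<forall>\<Delta>\<in>sets M. is_effect (A \<Delta> + B \<Delta>)"
    using SobD(1)[of "A + B" M] by simp
next
  assume "\<forall>\<Delta>\<in>sets M. is_effect (A \<Delta> + B \<Delta>)"
  moreover have "(\<lambda>n. (A + B) (D n) \<phi>) sums ((A + B) (\<Union>n. D n) \<phi>)"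
    if "range D \<subseteq> sets M" "disjoint_family D" for D :: "nat \<Rightarrow> _" and \<phi>
    using sums_add[OF SobD(3)[OF A that] SobD(3)[OF B that]] by simp
  ultimately show "A + B \<in> Sob M"
    using SobD(2)[OF A] SobD(2)[OF B] unfolding Sob_def by simp
qed

lemma Sob_add_drop_left:
  assumes A: "A \<in> Sob M" and B: "B \<in> Sob M" and C: "C \<in> Sob M"
    and ABC: "A + (B + C) \<in> Sob M"
  shows "B + C \<in> Sob M"
  unfolding Sob_add_iff[OF B C]
proof
  fix \<Delta> assume \<Delta>: "\<Delta> \<in> sets M"
  have eB: "is_effect (B \<Delta>)" and eC: "is_effect (C \<Delta>)"
    using SobD(1) B C \<Delta> by blast+
  show "is_effect (B \<Delta> + C \<Delta>)"
  proof (rule is_effect_summand)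
    show "is_effect (A \<Delta>)" using SobD(1)[OF A \<Delta>] .
    show "bounded_op (B \<Delta> + C \<Delta>)"
      using eB eC bounded_op_add unfolding is_effect_def by blast
    show "op_le (\<lambda>_. 0) (B \<Delta> + C \<Delta>)"
      using eB eC unfolding is_effect_def op_le_zero_iff by (simp add: cinner_add_right)
    show "is_effect (A \<Delta> + (B \<Delta> + C \<Delta>))"
      using SobD(1)[OF ABC \<Delta>] by simp
  qed
qed

lemma Sob_empty:
  assumes "A \<in> Sob M"
  shows "A {} = 0"
proof
  fix \<phi>
  have "(\<lambda>n. A {} \<phi>) sums A {} \<phi>"
    using SobD(3)[OF assms, of "\<lambda>_. {}" \<phi>] by (simp add: disjoint_family_on_def)
  then have "(\<lambda>n. A {} \<phi>) \<longlonglongrightarrow> 0"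
    by (simp add: sums_summable summable_LIMSEQ_zero)
  then show "A {} \<phi> = 0 \<phi>" using LIMSEQ_const_iff by auto
qed

lemma Sob_Un:
  assumes A: "A \<in> Sob M" and "X \<in> sets M" "Y \<in> sets M" "X \<inter> Y = {}"
  shows "A (X \<union> Y) = A X + A Y"
proof
  fix \<phi>
  have "range (binaryset X Y) \<subseteq> sets M" "disjoint_family (binaryset X Y)"
    using assms by (auto simp: range_binaryset_eq disjoint_family_on_def binaryset_def)
  from SobD(3)[OF A this, of \<phi>]
  have "(\<lambda>n. A (binaryset X Y n) \<phi>) sums A (X \<union> Y) \<phi>"
    by (simp add: UN_binaryset_eq)
  moreover have "(\<lambda>n. A (binaryset X Y n) \<phi>) sums (A X \<phi> + A Y \<phi>)"
    using binaryset_sums[of "\<lambda>S. A S \<phi>"] Sob_empty[OF A] by simp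
  ultimately show "A (X \<union> Y) \<phi> = (A X + A Y) \<phi>"
    by (simp add: sums_unique2)
qed

lemma Sob_le_space:
  assumes A: "A \<in> Sob M" and \<Delta>: "\<Delta> \<in> sets M"
  shows "op_le (A \<Delta>) (A (space M))"
proof -
  have "\<Delta> \<union> (space M - \<Delta>) = space M"
    using sets.sets_into_space[OF \<Delta>] by blast
  then have "A (space M) = A \<Delta> + A (space M - \<Delta>)"
    using Sob_Un[OF A \<Delta>, of "space M - \<Delta>"] \<Delta> by auto
  moreover have "op_le (\<lambda>_. 0) (A (space M - \<Delta>))"
    using SobD(1)[OF A] \<Delta> unfolding is_effect_def by blast
  ultimately show ?thesis
    unfolding op_le_def op_le_zero_iff by (simp add: cinner_add_right)
qed

lemma Sob_eq_zero_if_add_observable: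
  assumes A: "A \<in> Sob M" and Z: "is_observable M Z" and AZ: "A + Z \<in> Sob M"
  shows "A = 0"
proof
  fix \<Delta>
  show "A \<Delta> = 0 \<Delta>"
  proof (cases "\<Delta> \<in> sets M")
    case False
    then show ?thesis using SobD(2)[OF A] by simp
  next
    case True
    have space_nonpos: "cinner \<phi> (A (space M) \<phi>) \<le> 0" for \<phi>
    proof -
      have "cinner \<phi> ((A + Z) (space M) \<phi>) \<le> cinner \<phi> (id \<phi>)"
        using SobD(1)[OF AZ] unfolding is_effect_def op_le_def by simp
      moreover have "Z (space M) = id" using Z unfolding is_observable_def by blast
      ultimately show ?thesis by (simp add: cinner_add_right)
    qed
    have "cinner \<phi> (A \<Delta> \<phi>) = 0" for \<phi>
    proof (rule order.antisym)
      show "cinner \<phi> (A \<Delta> \<phi>) \<le> 0"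
        using Sob_le_space[OF A True] space_nonpos[of \<phi>] unfolding op_le_def
        by (meson order.trans)
      show "0 \<le> cinner \<phi> (A \<Delta> \<phi>)"
        using SobD(1)[OF A True] unfolding is_effect_def op_le_zero_iff by blast
    qed
    moreover have "clinear_op (A \<Delta>)"
      using SobD(1)[OF A True] unfolding is_effect_def bounded_op_def by blast
    ultimately show ?thesis
      by (simp add: clinear_op_eq_zero_if_cinner_self_zero zero_fun_def)
  qed
qed

theorem theorem3p1:
  fixes M :: "'w measure"
    and U :: "('w set \<Rightarrow> 'h::chilbert_space \<Rightarrow> 'h) set"
    and Z :: "'w set \<Rightarrow> 'h \<Rightarrow> 'h"
  assumes U_Sob: "U \<subseteq> Sob M"
    and S1: "Z \<in> U" "is_observable M Z"
    and S2: "\<forall>A\<in>U. Z - A \<in> U"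
    and S3: "\<forall>A\<in>U. \<forall>B\<in>U. A + B \<in> Sob M \<longrightarrow> A + B \<in> U"
  shows "effect_algebra U (\<lambda>A B. A + B \<in> Sob M) (+) 0 Z"
proof -
  have zero: "0 \<in> U" using S2 S1(1) by force
  have comm: "\<forall>A\<in>U. \<forall>B\<in>U. A + B \<in> Sob M \<longrightarrow> B + A \<in> Sob M \<and> A + B = B + A"
    by (simp add: add.commute)
  have assoc: "\<forall>A\<in>U. \<forall>B\<in>U. \<forall>C\<in>U. A + B \<in> Sob M \<and> C + (A + B) \<in> Sob M \<longrightarrow>
      B + C \<in> Sob M \<and> A + (B + C) \<in> Sob M \<and> A + (B + C) = A + B + C"
  proof (intro ballI impI)
    fix A B C assume "A \<in> U" "B \<in> U" "C \<in> U" "A + B \<in> Sob M \<and> C + (A + B) \<in> Sob M"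
    moreover from this have "A + (B + C) \<in> Sob M" by (simp only: ac_simps)
    ultimately show "B + C \<in> Sob M \<and> A + (B + C) \<in> Sob M \<and> A + (B + C) = A + B + C"
      using Sob_add_drop_left[of A M B C] U_Sob by (auto simp only: add.assoc subset_iff)
  qed
  have compl: "\<forall>A\<in>U. \<exists>!A'. A' \<in> U \<and> A' + A \<in> Sob M \<and> A + A' = Z"
  proof
    fix A assume "A \<in> U"
    then show "\<exists>!A'. A' \<in> U \<and> A' + A \<in> Sob M \<and> A + A' = Z"
      using S1(1) S2 U_Sob by (intro ex1I[of _ "Z - A"]) auto
  qed
  have unit: "\<forall>A\<in>U. A + Z \<in> Sob M \<longrightarrow> A = 0"
    using U_Sob S1(2) Sob_eq_zero_if_add_observable by blast
  show ?thesis
    unfolding effect_algebra_def using zero S1(1) S3 comm assoc compl unit by (intro conjI)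
qed

end
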